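(* Let $(M,\diamond,\bullet,\alpha_M)$ be a module over the multiplicative Hom-post-Lie algebra $(L,[\cdot,\cdot],\cdot,\alpha)$ and let $n$ be a non-negative integer. Define $\diamond^{n,0},\bullet^{n,0}:L\otimes M\to M$ by $x\diamond^{n,0}m=\alpha^n(x)\diamond m$ and $x\bullet^{n,0}m=\alpha^n(x)\bullet m$. Then $(M,\diamond^{n,0},\bullet^{n,0},\alpha_M)$ is a module over $L$.
   Context: All vector spaces are over a field $\mathbb{K}$ of characteristic $\neq 2$. A Hom-Lie algebra is $(L,[\cdot,\cdot],\alpha)$ with $[\cdot,\cdot]$ bilinear skew-symmetric, $\alpha$ linear, and $[\alpha(x),[y,z]]+[\alpha(y),[z,x]]+[\alpha(z),[x,y]]=0$. A Hom-post-Lie algebra $(L,[\cdot,\cdot],\cdot,\alpha)$ is a Hom-Lie algebra with bilinear $\cdot$ such that $\alpha(z)\cdot[x,y]-[z\cdot x,\alpha(y)]-[\alpha(x),z\cdot y]=0$ and $\alpha(z)\cdot(y\cdot x)-\alpha(y)\cdot(z\cdot x)+(y\cdot z)\cdot\alpha(x)-(z\cdot y)\cdot\alpha(x)+[y,z]\cdot\alpha(x)=0$ for all $x,y,z$; it is multiplicative if $\alpha([x,y])=[\alpha(x),\alpha(y)]$ and $\alpha(x\cdot y)=\alpha(x)\cdot\alpha(y)$. A module over $L$ is a vector space $M$ with linear $\alpha_M$ and bilinear $\diamond,\bullet:L\otimes M\to M$ such that for all $x,y\in L,m\in M$: (i) $\alpha_M(x\diamond m)=\alpha(x)\diamond\alpha_M(m)$,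 $\alpha_M(x\bullet m)=\alpha(x)\bullet\alpha_M(m)$; (ii) $[x,y]\diamond\alpha_M(m)=\alpha(x)\diamond(y\diamond m)-\alpha(y)\diamond(x\diamond m)$; (iii) $(x\cdot y)\diamond\alpha_M(m)=\alpha(x)\bullet(y\diamond m)-\alpha(y)\diamond(x\bullet m)$; (iv) $[x,y]\bullet\alpha_M(m)=\alpha(x)\bullet(y\bullet m)-\alpha(y)\bullet(x\bullet m)-(x\cdot y)\bullet\alpha_M(m)+(y\cdot x)\bullet\alpha_M(m)$. *)

theory Defs
  imports Main "HOL.Vector_Spaces"
begin

definition bilinear_map ::
  "('k::field \<Rightarrow> 'a::ab_group_add \<Rightarrow> 'a) \<Rightarrow> ('k \<Rightarrow> 'b::ab_group_add \<Rightarrow> 'b) \<Rightarrow>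
   ('k \<Rightarrow> 'c::ab_group_add \<Rightarrow> 'c) \<Rightarrow> ('a \<Rightarrow> 'b \<Rightarrow> 'c) \<Rightarrow> bool" where
  "bilinear_map sa sb sc f \<longleftrightarrow>
     (\<forall>y. Vector_Spaces.linear sa sc (\<lambda>x. f x y)) \<and>
     (\<forall>x. Vector_Spaces.linear sb sc (\<lambda>y. f x y))"

definition HomLie ::
  "('k::field \<Rightarrow> 'l::ab_group_add \<Rightarrow> 'l) \<Rightarrow> ('l \<Rightarrow> 'l \<Rightarrow> 'l) \<Rightarrow> ('l \<Rightarrow> 'l) \<Rightarrow> bool" where
  "HomLie s br \<alpha> \<longleftrightarrow>
     vector_space s \<and> bilinear_map s s s br \<and> Vector_Spaces.linear s s \<alpha> \<and>
     (\<forall>x y. br x y = - br y x) \<and>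
     (\<forall>x y z. br (\<alpha> x) (br y z) + br (\<alpha> y) (br z x) + br (\<alpha> z) (br x y) = 0)"

definition HomPostLie ::
  "('k::field \<Rightarrow> 'l::ab_group_add \<Rightarrow> 'l) \<Rightarrow> ('l \<Rightarrow> 'l \<Rightarrow> 'l) \<Rightarrow> ('l \<Rightarrow> 'l \<Rightarrow> 'l)
    \<Rightarrow> ('l \<Rightarrow> 'l) \<Rightarrow> bool" where
  "HomPostLie s br dot \<alpha> \<longleftrightarrow>
     HomLie s br \<alpha> \<and> bilinear_map s s s dot \<and>
     (\<forall>x y z. dot (\<alpha> z) (br x y) - br (dot z x) (\<alpha> y) - br (\<alpha> x) (dot z y) = 0) \<and>
     (\<forall>x y z. dot (\<alpha> z) (dot y x) - dot (\<alpha> y) (dot z x) + dot (dot y z) (\<alpha> x)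
               - dot (dot z y) (\<alpha> x) + dot (br y z) (\<alpha> x) = 0)"

definition MultHomPostLie ::
  "('k::field \<Rightarrow> 'l::ab_group_add \<Rightarrow> 'l) \<Rightarrow> ('l \<Rightarrow> 'l \<Rightarrow> 'l) \<Rightarrow> ('l \<Rightarrow> 'l \<Rightarrow> 'l)
    \<Rightarrow> ('l \<Rightarrow> 'l) \<Rightarrow> bool" where
  "MultHomPostLie s br dot \<alpha> \<longleftrightarrow>
     HomPostLie s br dot \<alpha> \<and>
     (\<forall>x y. \<alpha> (br x y) = br (\<alpha> x) (\<alpha> y)) \<and>
     (\<forall>x y. \<alpha> (dot x y) = dot (\<alpha> x) (\<alpha> y))"

definition HomPostLieModule ::
  "('k::field \<Rightarrow> 'l::ab_group_add \<Rightarrow> 'l) \<Rightarrow> ('l \<Rightarrow> 'l \<Rightarrow> 'l) \<Rightarrow> ('l \<Rightarrow> 'l \<Rightarrow> 'l)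
    \<Rightarrow> ('l \<Rightarrow> 'l) \<Rightarrow> ('k \<Rightarrow> 'm::ab_group_add \<Rightarrow> 'm)
    \<Rightarrow> ('l \<Rightarrow> 'm \<Rightarrow> 'm) \<Rightarrow> ('l \<Rightarrow> 'm \<Rightarrow> 'm) \<Rightarrow> ('m \<Rightarrow> 'm) \<Rightarrow> bool" where
  "HomPostLieModule s br dot \<alpha> sM dia bul \<alpha>M \<longleftrightarrow>
     vector_space sM \<and> Vector_Spaces.linear sM sM \<alpha>M \<and>
     bilinear_map s sM sM dia \<and> bilinear_map s sM sM bul \<and>
     (\<forall>x m. \<alpha>M (dia x m) = dia (\<alpha> x) (\<alpha>M m)) \<and>
     (\<forall>x m. \<alpha>M (bul x m) = bul (\<alpha> x) (\<alpha>M m)) \<and>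
     (\<forall>x y m. dia (br x y) (\<alpha>M m) = dia (\<alpha> x) (dia y m) - dia (\<alpha> y) (dia x m)) \<and>
     (\<forall>x y m. dia (dot x y) (\<alpha>M m) = bul (\<alpha> x) (dia y m) - dia (\<alpha> y) (bul x m)) \<and>
     (\<forall>x y m. bul (br x y) (\<alpha>M m) = bul (\<alpha> x) (bul y m) - bul (\<alpha> y) (bul x m)
                 - bul (dot x y) (\<alpha>M m) + bul (dot y x) (\<alpha>M m))"

end

theory Submission
  imports Defs
begin

text \<open>Precomposing both actions with a linear endomorphism \<open>\<phi>\<close> of \<open>L\<close> that commutes with
\<open>\<alpha>\<close> and preserves both products again gives a module: every module axiom for the twisted
actions is the original axiom applied to \<open>\<phi> x, \<phi> y\<close>. Multiplicativity makes \<open>\<alpha>\<^sup>n\<close> such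
an endomorphism.\<close>

lemma linear_funpow:
  assumes "vector_space s" and "Vector_Spaces.linear s s f"
  shows "Vector_Spaces.linear s s (f ^^ n)"
proof (induction n)
  case 0
  show ?case using vector_space.linear_id[OF assms(1)] by (simp add: id_def)
next
  case (Suc n)
  have "Vector_Spaces.linear s s (f \<circ> (f ^^ n))"
    by (rule Vector_Spaces.linear_compose[OF Suc assms(2)])
  then show ?case by (simp add: comp_def)
qed

lemma funpow_hom2:
  assumes "\<And>x y. f (b x y) = b (f x) (f y)"
  shows "(f ^^ n) (b x y) = b ((f ^^ n) x) ((f ^^ n) y)"
  by (induction n) (simp_all add: assms)

lemma bilinear_map_compose_left:
  assumes "Vector_Spaces.linear sa sa' \<phi>" and "bilinear_map sa' sb sc g"
  shows "bilinear_map sa sb sc (\<lambda>x y. g (\<phi> x) y)"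
proof -
  have "Vector_Spaces.linear sa sc ((\<lambda>x. g x y) \<circ> \<phi>)" for y
    using Vector_Spaces.linear_compose[OF assms(1)] assms(2)
    unfolding bilinear_map_def by blast
  then show ?thesis
    using assms(2) unfolding bilinear_map_def comp_def by blast
qed

lemma HomPostLieModule_precompose:
  assumes module: "HomPostLieModule s br dot \<alpha> sM dia bul \<alpha>M"
    and lin: "Vector_Spaces.linear s s \<phi>"
    and comm: "\<And>x. \<phi> (\<alpha> x) = \<alpha> (\<phi> x)"
    and hom_br: "\<And>x y. \<phi> (br x y) = br (\<phi> x) (\<phi> y)"
    and hom_dot: "\<And>x y. \<phi> (dot x y) = dot (\<phi> x) (\<phi> y)"
  shows "HomPostLieModule s br dot \<alpha> sM (\<lambda>x m. dia (\<phi> x) m) (\<lambda>x m. bul (\<phi> x) m) \<alpha>M"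
proof -
  have "bilinear_map s sM sM (\<lambda>x m. dia (\<phi> x) m)" "bilinear_map s sM sM (\<lambda>x m. bul (\<phi> x) m)"
    using module bilinear_map_compose_left[OF lin] unfolding HomPostLieModule_def by blast+
  then show ?thesis
    using module unfolding HomPostLieModule_def comm hom_br hom_dot by simp
qed

theorem mainTheorem5:
  fixes s :: "'k::field \<Rightarrow> 'l::ab_group_add \<Rightarrow> 'l"
    and sM :: "'k \<Rightarrow> 'm::ab_group_add \<Rightarrow> 'm"
    and br dot :: "'l \<Rightarrow> 'l \<Rightarrow> 'l" and \<alpha> :: "'l \<Rightarrow> 'l"
    and dia bul :: "'l \<Rightarrow> 'm \<Rightarrow> 'm" and \<alpha>M :: "'m \<Rightarrow> 'm"
    and n :: nat
  assumes "(2::'k) \<noteq> 0"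
    and "MultHomPostLie s br dot \<alpha>"
    and "HomPostLieModule s br dot \<alpha> sM dia bul \<alpha>M"
  shows "HomPostLieModule s br dot \<alpha> sM
           (\<lambda>x m. dia ((\<alpha> ^^ n) x) m) (\<lambda>x m. bul ((\<alpha> ^^ n) x) m) \<alpha>M"
proof (rule HomPostLieModule_precompose[OF assms(3)])
  have vs: "vector_space s" and lin: "Vector_Spaces.linear s s \<alpha>"
    and hom_br: "\<And>x y. \<alpha> (br x y) = br (\<alpha> x) (\<alpha> y)"
    and hom_dot: "\<And>x y. \<alpha> (dot x y) = dot (\<alpha> x) (\<alpha> y)"
    using assms(2) unfolding MultHomPostLie_def HomPostLie_def HomLie_def by blast+
  show "Vector_Spaces.linear s s (\<alpha> ^^ n)" by (rule linear_funpow[OF vs lin])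
  show "\<And>x. (\<alpha> ^^ n) (\<alpha> x) = \<alpha> ((\<alpha> ^^ n) x)" by (rule funpow_swap1[symmetric])
  show "\<And>x y. (\<alpha> ^^ n) (br x y) = br ((\<alpha> ^^ n) x) ((\<alpha> ^^ n) y)"
    by (rule funpow_hom2[of \<alpha> br, OF hom_br])
  show "\<And>x y. (\<alpha> ^^ n) (dot x y) = dot ((\<alpha> ^^ n) x) ((\<alpha> ^^ n) y)"
    by (rule funpow_hom2[of \<alpha> dot, OF hom_dot])
qed

end
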